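(* Let $M$ and $M'$ be matchings of $X_{2k}$. Then $M$ and $M'$ are disjoint compatible if and only if there is a partition of $M$ into flippable sets whose convex hulls (of their endpoint sets) are pairwise disjoint, such that $M'$ is obtained from $M$ by flipping every set of this partition. Moreover, this partition is uniquely determined by $M$ and $M'$.
   Context: Let $k\ge 1$ and let $X_{2k}=\{P_1,\dots,P_{2k}\}$ be $2k$ points in convex position in the plane, labeled in clockwise cyclic order; indices are taken modulo $2k$. A matching of $X_{2k}$ means a set of $k$ pairwise non-crossing straight segments (edges) with endpoints in $X_{2k}$ covering every point exactly once. Two matchings $M,M'$ of $X_{2k}$ are disjoint compatible if they have no common edge and no edge of $M$ crosses an edge of $M'$. Flippable set: let $M$ be a matching and $N\subseteq M$ with $|N|=m\ge 2$; let $Y$ be the set of the $2m$ endpoints of edges of $N$, labeled $Q_1,\dots,Q_{2m}$ in the cyclic order inherited from $X_{2k}$ (for a suitable choice of $Q_1$). $N$ is a flippable set if $N=\{Q_1Q_2,Q_3Q_4,\dots,Q_{2m-1}Q_{2m}\}$ and the convex hull of $Y$ intersects no edge of $M\setminus N$. Flipping $N$ means replacing $N$ by $\{Q_2Q_3,Q_4Q_5,\dots,Q_{2m-2}Q_{2m-1},Q_{2m}Q_1\}$. *)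

theory Defs
  imports "HOL-Analysis.Analysis"
begin

text \<open>Points are given by an index map P :: nat => real^2; the point set is
  X = {P 0, ..., P (2k-1)}.\<close>

definition orient :: "real^2 \<Rightarrow> real^2 \<Rightarrow> real^2 \<Rightarrow> real" where
  "orient a b c = (b$1 - a$1) * (c$2 - a$2) - (b$2 - a$2) * (c$1 - a$1)"

text \<open>2k points in convex position, labeled in clockwise cyclic order.\<close>
definition convex_clockwise :: "(nat \<Rightarrow> real^2) \<Rightarrow> nat \<Rightarrow> bool" where
  "convex_clockwise P k \<longleftrightarrow>
     (\<forall>i < 2*k. P i \<notin> convex hull (P ` ({0..<2*k} - {i}))) \<and>
     (\<forall>i j l. i < j \<and> j < l \<and> l < 2*k \<longrightarrow> orient (P i) (P j) (P l) < 0)"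

definition seg :: "(nat \<Rightarrow> real^2) \<Rightarrow> nat set \<Rightarrow> (real^2) set" where
  "seg P e = convex hull (P ` e)"

definition crosses :: "(nat \<Rightarrow> real^2) \<Rightarrow> nat set \<Rightarrow> nat set \<Rightarrow> bool" where
  "crosses P e f \<longleftrightarrow> (\<exists>x. x \<in> seg P e \<and> x \<in> seg P f \<and> x \<notin> P ` (e \<inter> f))"

definition is_matching :: "(nat \<Rightarrow> real^2) \<Rightarrow> nat \<Rightarrow> nat set set \<Rightarrow> bool" where
  "is_matching P k M \<longleftrightarrow>
     finite M \<and> card M = k \<and>
     (\<forall>e\<in>M. e \<subseteq> {0..<2*k} \<and> card e = 2) \<and>
     (\<forall>e\<in>M. \<forall>f\<in>M. e \<noteq> f \<longrightarrow> \<not> crosses P e f) \<and>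
     (\<forall>i < 2*k. \<exists>!e. e \<in> M \<and> i \<in> e)"

definition disjoint_compatible ::
  "(nat \<Rightarrow> real^2) \<Rightarrow> nat set set \<Rightarrow> nat set set \<Rightarrow> bool" where
  "disjoint_compatible P M M' \<longleftrightarrow>
     M \<inter> M' = {} \<and> (\<forall>e\<in>M. \<forall>f\<in>M'. \<not> crosses P e f)"

text \<open>Endpoints of N in cyclic (index) order, starting at offset r:
  Q r j is Q_(j+1) in the paper (0-based), indices modulo 2m.\<close>
definition Qlab :: "nat set set \<Rightarrow> nat \<Rightarrow> nat \<Rightarrow> nat" where
  "Qlab N r j = (let ys = sorted_list_of_set (\<Union>N)
                 in ys ! ((j + r) mod length ys))"

text \<open>s = 0: {Q1Q2, Q3Q4, ..., Q(2m-1)Q(2m)};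
      s = 1: {Q2Q3, ..., Q(2m-2)Q(2m-1), Q(2m)Q1}.\<close>
definition pairs :: "nat set set \<Rightarrow> nat \<Rightarrow> nat \<Rightarrow> nat set set" where
  "pairs N r s = {{Qlab N r (2*i + s), Qlab N r (2*i + s + 1)} | i. i < card N}"

definition flippable :: "(nat \<Rightarrow> real^2) \<Rightarrow> nat set set \<Rightarrow> nat set set \<Rightarrow> bool" where
  "flippable P M N \<longleftrightarrow>
     N \<subseteq> M \<and> card N \<ge> 2 \<and>
     (\<exists>r. N = pairs N r 0) \<and>
     (\<forall>e \<in> M - N. convex hull (P ` \<Union>N) \<inter> seg P e = {})"

definition flip :: "nat set set \<Rightarrow> nat set set" where
  "flip N = pairs N (SOME r. N = pairs N r 0) 1"

definition good_partition ::
  "(nat \<Rightarrow> real^2) \<Rightarrow> nat set set \<Rightarrow> nat set set \<Rightarrow> nat set set set \<Rightarrow> bool" where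
  "good_partition P M M' Pt \<longleftrightarrow>
     \<Union>Pt = M \<and> {} \<notin> Pt \<and>
     (\<forall>N1\<in>Pt. \<forall>N2\<in>Pt. N1 \<noteq> N2 \<longrightarrow> N1 \<inter> N2 = {}) \<and>
     (\<forall>N\<in>Pt. flippable P M N) \<and>
     (\<forall>N1\<in>Pt. \<forall>N2\<in>Pt. N1 \<noteq> N2 \<longrightarrow>
         convex hull (P ` \<Union>N1) \<inter> convex hull (P ` \<Union>N2) = {}) \<and>
     M' = (M - \<Union>Pt) \<union> \<Union>(flip ` Pt)"

end

theory Submission
  imports Defs
begin

text \<open>If M and M' are disjoint compatible, every vertex has one M-edge and one M'-edge, so
  M \<union> M' splits into alternating cycles. An edge of M \<union> M' is never crossed by another one,
  so each cycle lies entirely on one side of each chord it does not use; applied to its own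
  chords this shows that consecutive vertices of a cycle, in the cyclic order of the points, are
  joined by an edge. Hence the M-edges of a cycle form a flippable set whose flip is the M'-edges
  of that cycle, and distinct cycles are separated by a chord, so their convex hulls are
  disjoint. Conversely, a flippable set and its flip consist of chords between cyclically
  consecutive endpoints, which do not cross. The parts of any such partition are exactly the
  vertex sets of the cycles, which gives uniqueness.\<close>

section \<open>Orientation and crossing chords\<close>

lemma orient_cycle: "orient a b c = orient b c a"
  unfolding orient_def by (simp add: algebra_simps)

lemma orient_swap_first: "orient b a c = - orient a b c"
  unfolding orient_def by (simp add: algebra_simps)

lemma orient_swap_last: "orient a c b = - orient a b c"
  unfolding orient_def by (simp add: algebra_simps)

lemma orient_self_left: "orient a b a = 0" and orient_self_right: "orient a b b = 0"
  unfolding orient_def by (simp_all add: algebra_simps)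

lemma orient_convex_comb:
  "orient a b ((1 - u) *\<^sub>R x + u *\<^sub>R y) = (1 - u) * orient a b x + u * orient a b y"
  unfolding orient_def by (simp add: algebra_simps)

lemma orient_closed_segment: "x \<in> closed_segment a b \<Longrightarrow> orient a b x = 0"
  by (auto simp: closed_segment_def orient_convex_comb orient_self_left orient_self_right)

lemma closed_segment_orient_zero_endpoint:
  assumes x: "x \<in> closed_segment p q" "orient a b x = 0"
    and same_sign: "(0 \<le> orient a b p \<and> 0 \<le> orient a b q) \<or> (orient a b p \<le> 0 \<and> orient a b q \<le> 0)"
    and nonzero: "orient a b p \<noteq> 0 \<or> orient a b q \<noteq> 0"
  shows "(x = p \<and> orient a b p = 0) \<or> (x = q \<and> orient a b q = 0)"
proof -
  obtain u where u: "0 \<le> u" "u \<le> 1" and xu: "x = (1 - u) *\<^sub>R p + u *\<^sub>R q"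
    using x(1) unfolding closed_segment_def by blast
  have sum: "(1 - u) * orient a b p + u * orient a b q = 0"
    using x(2) by (simp add: xu orient_convex_comb)
  have "0 \<le> (1 - u) * orient a b p \<and> 0 \<le> u * orient a b q \<or>
        (1 - u) * orient a b p \<le> 0 \<and> u * orient a b q \<le> 0"
    using same_sign u by (auto intro: mult_nonneg_nonneg mult_nonneg_nonpos)
  then have "(1 - u) * orient a b p = 0" "u * orient a b q = 0"
    using sum by linarith+
  then show ?thesis
    using nonzero xu by auto
qed

lemma convex_orient_pos: "convex {x. 0 < orient a b x}"
proof (unfold convex_alt, intro ballI allI impI)
  fix x y and u :: real
  assume "x \<in> {x. 0 < orient a b x}" "y \<in> {x. 0 < orient a b x}" and u: "0 \<le> u \<and> u \<le> 1"
  then have pos: "0 < orient a b x" "0 < orient a b y" by auto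
  have "0 < (1 - u) * orient a b x + u * orient a b y"
  proof (cases "u = 1")
    case False
    then have "0 < (1 - u) * orient a b x" "0 \<le> u * orient a b y" using u pos by auto
    then show ?thesis by linarith
  qed (use pos in simp)
  then show "(1 - u) *\<^sub>R x + u *\<^sub>R y \<in> {x. 0 < orient a b x}"
    by (simp add: orient_convex_comb)
qed

lemma convex_orient_nonpos: "convex {x. orient a b x \<le> 0}"
proof (unfold convex_alt, intro ballI allI impI)
  fix x y and u :: real
  assume "x \<in> {x. orient a b x \<le> 0}" "y \<in> {x. orient a b x \<le> 0}" and u: "0 \<le> u \<and> u \<le> 1"
  then have "(1 - u) * orient a b x \<le> 0" "u * orient a b y \<le> 0"
    by (auto simp: mult_nonneg_nonpos)
  then show "(1 - u) *\<^sub>R x + u *\<^sub>R y \<in> {x. orient a b x \<le> 0}"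
    by (simp add: orient_convex_comb)
qed

lemma convex_hulls_disjoint_by_orient:
  assumes "\<forall>x\<in>S. 0 < orient a b x" "\<forall>x\<in>T. orient a b x \<le> 0"
  shows "convex hull S \<inter> convex hull T = {}"
proof -
  have "convex hull S \<subseteq> {x. 0 < orient a b x}"
    using assms(1) by (intro hull_minimal convex_orient_pos) auto
  moreover have "convex hull T \<subseteq> {x. orient a b x \<le> 0}"
    using assms(2) by (intro hull_minimal convex_orient_nonpos) auto
  ultimately show ?thesis by force
qed

lemma clockwise_orient_sign:
  assumes cc: "convex_clockwise P k" and ab: "a < b" "b < 2*k" and v: "v < 2*k"
  shows "a < v \<Longrightarrow> v < b \<Longrightarrow> 0 < orient (P a) (P b) (P v)"
    and "v < a \<Longrightarrow> orient (P a) (P b) (P v) < 0"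
    and "b < v \<Longrightarrow> orient (P a) (P b) (P v) < 0"
proof -
  have neg: "\<And>i j l. i < j \<Longrightarrow> j < l \<Longrightarrow> l < 2*k \<Longrightarrow> orient (P i) (P j) (P l) < 0"
    using cc unfolding convex_clockwise_def by blast
  show "a < v \<Longrightarrow> v < b \<Longrightarrow> 0 < orient (P a) (P b) (P v)"
    using neg[of a v b] ab orient_swap_last[of "P a" "P v" "P b"] by simp
  show "v < a \<Longrightarrow> orient (P a) (P b) (P v) < 0"
    using neg[of v a b] ab orient_cycle[of "P v" "P a" "P b"] by simp
  show "b < v \<Longrightarrow> orient (P a) (P b) (P v) < 0"
    using neg[of a b v] ab v by simp
qed

lemma seg_doubleton: "seg P {a, b} = closed_segment (P a) (P b)"
  unfolding seg_def by (simp add: segment_convex_hull)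

lemma crosses_commute: "crosses P e f = crosses P f e"
  unfolding crosses_def by (auto simp: Int_commute)

lemma vec2_eqI:
  fixes x y :: "real^2"
  assumes "x$1 = y$1" "x$2 = y$2"
  shows "x = y"
  using assms by (simp add: vec_eq_iff forall_2)

lemma crosses_interleaved:
  assumes cc: "convex_clockwise P k" and order: "a < c" "c < b" "b < d" "d < 2*k"
  shows "crosses P {a, b} {c, d}"
proof -
  define A B C D where "A = P a" and "B = P b" and "C = P c" and "D = P d"
  define \<alpha> \<beta> \<gamma> \<delta> where "\<alpha> = orient C D A" and "\<beta> = orient C D B"
    and "\<gamma> = orient A B C" and "\<delta> = orient A B D"
  note defs = A_def B_def C_def D_def \<alpha>_def \<beta>_def \<gamma>_def \<delta>_def
  have signs: "\<alpha> < 0" "0 < \<beta>" "0 < \<gamma>" "\<delta> < 0"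
    using clockwise_orient_sign[OF cc, of c d a] clockwise_orient_sign[OF cc, of c d b]
      clockwise_orient_sign[OF cc, of a b c] clockwise_orient_sign[OF cc, of a b d] order
    unfolding defs by auto
  \<comment> \<open>the intersection point of the two lines, written in barycentric form on both chords\<close>
  have id1: "\<beta> - \<alpha> = \<gamma> - \<delta>"
    unfolding defs orient_def by (simp add: algebra_simps)
  have id2: "\<beta> * A$i - \<alpha> * B$i = \<gamma> * D$i - \<delta> * C$i" if "i = 1 \<or> i = 2" for i
    using that unfolding defs orient_def by (auto simp: algebra_simps)
  define u where "u = - \<alpha> / (\<beta> - \<alpha>)"
  define s where "s = \<gamma> / (\<gamma> - \<delta>)"
  define x where "x = (1 - u) *\<^sub>R A + u *\<^sub>R B"
  have u: "0 \<le> u" "u \<le> 1" and s: "0 \<le> s" "s \<le> 1"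
    using signs unfolding u_def s_def by (auto simp: field_simps)
  have x_AB: "x \<in> closed_segment A B"
    unfolding closed_segment_def x_def using u by blast
  have "x = (1 - s) *\<^sub>R C + s *\<^sub>R D"
  proof (rule vec2_eqI)
    have L: "x $ i = (\<beta> * A$i - \<alpha> * B$i) / (\<beta> - \<alpha>)" for i
      using signs unfolding x_def u_def by (simp add: divide_simps) (simp add: algebra_simps)?
    have R: "((1 - s) *\<^sub>R C + s *\<^sub>R D) $ i = (\<gamma> * D$i - \<delta> * C$i) / (\<gamma> - \<delta>)" for i
      using signs unfolding s_def by (simp add: divide_simps) (simp add: algebra_simps)?
    show "x $ 1 = ((1 - s) *\<^sub>R C + s *\<^sub>R D) $ 1" "x $ 2 = ((1 - s) *\<^sub>R C + s *\<^sub>R D) $ 2"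
      unfolding L R using id1 id2[of 1] id2[of 2] by simp_all
  qed
  then have x_CD: "x \<in> closed_segment C D"
    unfolding closed_segment_def using s by blast
  have "{a, b} \<inter> {c, d} = {}"
    using order by auto
  then show ?thesis
    unfolding crosses_def seg_doubleton using x_AB x_CD A_def B_def C_def D_def by auto
qed

lemma crosses_if_interleaved:
  assumes cc: "convex_clockwise P k" and ab: "a < b" "b < 2*k" and cd: "c < 2*k" "d < 2*k"
    and disj: "c \<notin> {a, b}" "d \<notin> {a, b}"
    and interleaved: "(a < c \<and> c < b) \<noteq> (a < d \<and> d < b)"
  shows "crosses P {a, b} {c, d}"
proof -
  have one_inside: "crosses P {a, b} {c, d}"
    if "c < 2*k" "d < 2*k" "d \<notin> {a, b}" "a < c" "c < b" "\<not> (a < d \<and> d < b)" for c d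
  proof (cases "d < a")
    case True
    then have "crosses P {d, c} {a, b}"
      using crosses_interleaved[OF cc, of d a c b] that ab by simp
    then show ?thesis by (metis crosses_commute insert_commute)
  next
    case False
    then have "b < d" using that by auto
    then show ?thesis using crosses_interleaved[OF cc, of a c b d] that ab by simp
  qed
  show ?thesis
  proof (cases "a < c \<and> c < b")
    case True
    then show ?thesis using one_inside[of c d] assms by auto
  next
    case False
    then have "crosses P {a, b} {d, c}" using one_inside[of d c] assms by auto
    then show ?thesis by (metis insert_commute)
  qed
qed

lemma not_crosses_one_side:
  assumes cc: "convex_clockwise P k" and ab: "a < b" "b < 2*k"
    and cd: "c < 2*k" "d < 2*k" "c \<noteq> d" "{c, d} \<noteq> {a, b}"
    and side: "(\<forall>v\<in>{c, d}. v \<le> a \<or> b \<le> v) \<or> (\<forall>v\<in>{c, d}. a \<le> v \<and> v \<le> b)"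
  shows "\<not> crosses P {a, b} {c, d}"
proof
  assume "crosses P {a, b} {c, d}"
  then obtain x where x: "x \<in> closed_segment (P a) (P b)" "x \<in> closed_segment (P c) (P d)"
    and not_common: "x \<notin> P ` ({a, b} \<inter> {c, d})"
    unfolding crosses_def seg_doubleton by blast
  let ?f = "\<lambda>v. orient (P a) (P b) (P v)"
  have zero_iff: "?f v = 0 \<longleftrightarrow> v \<in> {a, b}" if "v < 2*k" for v
    using clockwise_orient_sign[OF cc ab that]
    by (cases v a rule: linorder_cases; cases v b rule: linorder_cases)
      (auto simp: orient_self_left orient_self_right)
  have same_sign: "(0 \<le> ?f c \<and> 0 \<le> ?f d) \<or> (?f c \<le> 0 \<and> ?f d \<le> 0)"
  proof (cases "\<forall>v\<in>{c, d}. v \<le> a \<or> b \<le> v")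
    case True
    have "?f v \<le> 0" if "v \<in> {c, d}" for v
      using clockwise_orient_sign(2,3)[OF cc ab, of v] zero_iff[of v] True that cd
      by (cases "v \<in> {a, b}") (auto simp: le_less)
    then show ?thesis by auto
  next
    case False
    then have inside: "\<forall>v\<in>{c, d}. a \<le> v \<and> v \<le> b" using side by blast
    have "0 \<le> ?f v" if "v \<in> {c, d}" for v
      using clockwise_orient_sign(1)[OF cc ab, of v] zero_iff[of v] inside that cd
      by (cases "v \<in> {a, b}") (auto simp: le_less)
    then show ?thesis by auto
  qed
  have "?f c \<noteq> 0 \<or> ?f d \<noteq> 0"
    using zero_iff cd by auto
  from closed_segment_orient_zero_endpoint[OF x(2) orient_closed_segment[OF x(1)] same_sign this]
  show False
    using zero_iff cd not_common by auto
qed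

lemma hulls_disjoint_chord_inside:
  assumes cc: "convex_clockwise P k" and cd: "c < d" "d < 2*k"
    and S: "S \<subseteq> {c<..<d}" and T: "T \<subseteq> {..<2*k}" "T \<inter> {c<..<d} = {}"
  shows "convex hull (P ` S) \<inter> convex hull (P ` T) = {}"
proof (rule convex_hulls_disjoint_by_orient)
  show "\<forall>x\<in>P ` S. 0 < orient (P c) (P d) x"
  proof
    fix x assume "x \<in> P ` S"
    then obtain v where "v \<in> S" "x = P v" by blast
    then show "0 < orient (P c) (P d) x"
      using clockwise_orient_sign(1)[OF cc cd, of v] S cd by auto
  qed
  show "\<forall>x\<in>P ` T. orient (P c) (P d) x \<le> 0"
  proof
    fix x assume "x \<in> P ` T"
    then obtain v where v: "v \<in> T" "x = P v" by blast
    then have "v < 2*k" "v < c \<or> v = c \<or> v = d \<or> d < v" using T by auto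
    then show "orient (P c) (P d) x \<le> 0"
      using clockwise_orient_sign(2,3)[OF cc cd, of v] v(2) orient_self_left orient_self_right
      by (metis less_imp_le order_refl)
  qed
qed

lemma hulls_disjoint_chord_outside:
  assumes cc: "convex_clockwise P k" and cd: "c < d" "d < 2*k"
    and S: "S \<subseteq> {..<2*k}" "S \<inter> {c..d} = {}" and T: "T \<subseteq> {c..d}"
  shows "convex hull (P ` S) \<inter> convex hull (P ` T) = {}"
proof (rule convex_hulls_disjoint_by_orient)
  show "\<forall>x\<in>P ` S. 0 < orient (P d) (P c) x"
  proof
    fix x assume "x \<in> P ` S"
    then obtain v where v: "v \<in> S" "x = P v" by blast
    then have "v < 2*k" "v < c \<or> d < v" using S by auto
    then have "orient (P c) (P d) x < 0"
      using clockwise_orient_sign(2,3)[OF cc cd, of v] v(2) by blast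
    then show "0 < orient (P d) (P c) x"
      using orient_swap_first[of "P d" "P c" x] by simp
  qed
  show "\<forall>x\<in>P ` T. orient (P d) (P c) x \<le> 0"
  proof
    fix x assume "x \<in> P ` T"
    then obtain v where v: "v \<in> T" "x = P v" by blast
    then have "v < 2*k" "(c < v \<and> v < d) \<or> v = c \<or> v = d" using T cd by auto
    then have "0 \<le> orient (P c) (P d) x"
      using clockwise_orient_sign(1)[OF cc cd, of v] v(2) orient_self_left orient_self_right
      by (metis less_imp_le order_refl)
    then show "orient (P d) (P c) x \<le> 0"
      using orient_swap_first[of "P d" "P c" x] by simp
  qed
qed

section \<open>Cyclic successor and sorted lists\<close>

lemma mod_add_right_cancel_nat:
  assumes "((a::nat) + c) mod L = (b + c) mod L"
  shows "a mod L = b mod L"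
proof -
  have "(int a + int c) mod int L = (int b + int c) mod int L"
    using assms by (metis of_nat_add zmod_int)
  then have "((int a + int c) mod int L - int c) mod int L = ((int b + int c) mod int L - int c) mod int L"
    by simp
  then have "int a mod int L = int b mod int L"
    by (simp add: mod_diff_left_eq)
  then show ?thesis by (metis of_nat_eq_iff zmod_int)
qed

definition csucc :: "nat \<Rightarrow> nat \<Rightarrow> nat" where
  "csucc L t = Suc t mod L"

lemma csucc_less: "0 < L \<Longrightarrow> csucc L t < L"
  unfolding csucc_def by simp

lemma csucc_mod: "csucc L (j mod L) = Suc j mod L"
  unfolding csucc_def by (simp add: mod_Suc_eq)

lemma csucc_of_less: "Suc t < L \<Longrightarrow> csucc L t = Suc t"
  unfolding csucc_def by simp

lemma csucc_last: "0 < L \<Longrightarrow> csucc L (L - 1) = 0"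
  unfolding csucc_def by simp

lemma csucc_inj:
  assumes "t1 < L" "t2 < L" "csucc L t1 = csucc L t2"
  shows "t1 = t2"
proof -
  have "(t1 + 1) mod L = (t2 + 1) mod L"
    using assms(3) unfolding csucc_def by simp
  then have "t1 mod L = t2 mod L" by (rule mod_add_right_cancel_nat)
  then show ?thesis using assms by simp
qed

lemma csucc_neq:
  assumes "2 \<le> L" "t < L"
  shows "csucc L t \<noteq> t"
proof
  assume "csucc L t = t"
  then have "(1 + t) mod L = (0 + t) mod L"
    using assms(2) unfolding csucc_def by simp
  then have "1 mod L = 0 mod L" by (rule mod_add_right_cancel_nat)
  then show False using assms(1) by simp
qed

lemma csucc_csucc_neq:
  assumes "3 \<le> L" "t < L"
  shows "csucc L (csucc L t) \<noteq> t"
proof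
  assume "csucc L (csucc L t) = t"
  then have "(2 + t) mod L = (0 + t) mod L"
    using assms(2) unfolding csucc_def by (simp add: mod_Suc_eq)
  then have "2 mod L = 0 mod L" by (rule mod_add_right_cancel_nat)
  then show False using assms(1) by simp
qed

lemma exists_mod_shift:
  assumes "(t0::nat) < L" "t < L"
  shows "\<exists>j. (t0 + j) mod L = t"
proof (cases "t0 \<le> t")
  case True
  then show ?thesis using assms by (intro exI[of _ "t - t0"]) auto
next
  case False
  then show ?thesis using assms by (intro exI[of _ "L - t0 + t"]) (simp add: add.assoc[symmetric])
qed

lemma even_mod_even_iff: "even (L::nat) \<Longrightarrow> even (j mod L) \<longleftrightarrow> even j"
  by (metis dvd_mod_iff)

lemma strict_sorted_nth_less_iff:
  assumes "sorted_wrt (<) (ys :: 'a::linorder list)" "i < length ys" "j < length ys"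
  shows "ys ! i < ys ! j \<longleftrightarrow> i < j"
proof (cases i j rule: linorder_cases)
  case less
  then show ?thesis using sorted_wrt_nth_less[OF assms(1) less assms(3)] by simp
next
  case greater
  then show ?thesis using sorted_wrt_nth_less[OF assms(1) greater assms(2)] by simp
qed simp

lemma strict_sorted_nth_eq_iff:
  assumes "sorted_wrt (<) (ys :: 'a::linorder list)" "i < length ys" "j < length ys"
  shows "ys ! i = ys ! j \<longleftrightarrow> i = j"
  using assms nth_eq_iff_index_eq strict_sorted_iff by blast

lemma strict_sorted_first_last:
  assumes "sorted_wrt (<) (ys :: 'a::linorder list)" "x \<in> set ys"
  shows "ys ! 0 \<le> x" "x \<le> ys ! (length ys - 1)"
proof -
  obtain i where i: "i < length ys" "ys ! i = x"
    using assms(2) by (auto simp: in_set_conv_nth)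
  have last: "length ys - 1 < length ys" and nonempty: "ys \<noteq> []" using i(1) by auto
  show "ys ! 0 \<le> x"
    using strict_sorted_nth_less_iff[OF assms(1), of 0 i] i nonempty by (cases "i = 0") auto
  show "x \<le> ys ! (length ys - 1)"
    using strict_sorted_nth_less_iff[OF assms(1) i(1) last] i
    by (cases "i = length ys - 1") auto
qed

lemma strict_sorted_outside_consecutive:
  assumes "sorted_wrt (<) (ys :: 'a::linorder list)" "x \<in> set ys" "Suc t < length ys"
  shows "x \<le> ys ! t \<or> ys ! Suc t \<le> x"
proof -
  obtain i where i: "i < length ys" "ys ! i = x"
    using assms(2) by (auto simp: in_set_conv_nth)
  show ?thesis
  proof (cases "i \<le> t")
    case True
    then show ?thesis
      using strict_sorted_nth_less_iff[OF assms(1) i(1), of t] i assms(3) by (cases "i = t") auto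
  next
    case False
    then show ?thesis
      using strict_sorted_nth_less_iff[OF assms(1) assms(3) i(1)] i by (cases "i = Suc t") auto
  qed
qed

lemma strict_sorted_between_consecutive:
  assumes s: "sorted_wrt (<) (ys :: 'a::linorder list)"
    and v: "ys ! 0 < v" "v < ys ! (length ys - 1)" "v \<notin> set ys"
  shows "\<exists>t. Suc t < length ys \<and> ys ! t < v \<and> v < ys ! Suc t"
proof -
  define T where "T = {t. t < length ys \<and> ys ! t < v}"
  have T: "t \<in> T \<longleftrightarrow> t < length ys \<and> ys ! t < v" for t
    unfolding T_def by simp
  have "ys \<noteq> []" using v by auto
  then have "0 \<in> T" using v T by simp
  moreover have fin: "finite T" unfolding T_def by simp
  ultimately have "Max T \<in> T" by (intro Max_in) auto
  then have t: "Max T < length ys" "ys ! Max T < v" using T by auto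
  then have st: "Suc (Max T) < length ys"
    using v(2) by (metis Suc_lessI diff_Suc_1 order.asym)
  have "Suc (Max T) \<notin> T" using Max_ge[OF fin] by (metis Suc_n_not_le_n)
  then have "v \<le> ys ! Suc (Max T)" using st T by simp
  moreover have "ys ! Suc (Max T) \<noteq> v" using v(3) nth_mem[OF st] by auto
  ultimately show ?thesis using st t by (intro exI[of _ "Max T"]) simp
qed

abbreviation cyclic_pair :: "'a list \<Rightarrow> nat \<Rightarrow> 'a set" where
  "cyclic_pair xs t \<equiv> {xs ! t, xs ! csucc (length xs) t}"

lemma strict_sorted_cyclic_pair_side:
  assumes s: "sorted_wrt (<) (ys :: 'a::linorder list)" and L: "2 \<le> length ys"
    and t: "t < length ys"
  shows "\<exists>a b. a < b \<and> cyclic_pair ys t = {a, b} \<and>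
     ((\<forall>v\<in>set ys. v \<le> a \<or> b \<le> v) \<or> (\<forall>v\<in>set ys. a \<le> v \<and> v \<le> b))"
proof (cases "Suc t < length ys")
  case True
  have "cyclic_pair ys t = {ys ! t, ys ! Suc t}" using csucc_of_less[OF True] by (simp only:)
  moreover have "ys ! t < ys ! Suc t" using sorted_wrt_nth_less[OF s _ True] by simp
  moreover have "\<forall>v\<in>set ys. v \<le> ys ! t \<or> ys ! Suc t \<le> v"
    using strict_sorted_outside_consecutive[OF s _ True] by blast
  ultimately show ?thesis by blast
next
  case False
  then have t': "t = length ys - 1" using t by simp
  have "Suc t = length ys" using t' L by arith
  then have "csucc (length ys) t = 0" unfolding csucc_def by simp
  then have "cyclic_pair ys t = {ys ! 0, ys ! t}" by (simp only: insert_commute)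
  moreover have "ys ! 0 < ys ! t" using sorted_wrt_nth_less[OF s, of 0 t] t' L by simp
  moreover have "\<forall>v\<in>set ys. ys ! 0 \<le> v \<and> v \<le> ys ! t"
    using strict_sorted_first_last[OF s] t' by auto
  ultimately show ?thesis by blast
qed

section \<open>Matchings\<close>

lemma matching_edge:
  "is_matching P k M \<Longrightarrow> e \<in> M \<Longrightarrow> e \<subseteq> {0..<2*k} \<and> card e = 2"
  unfolding is_matching_def by (elim conjE) (erule (1) bspec)

lemma matching_not_crosses:
  "is_matching P k M \<Longrightarrow> e \<in> M \<Longrightarrow> f \<in> M \<Longrightarrow> e \<noteq> f \<Longrightarrow> \<not> crosses P e f"
  unfolding is_matching_def by (elim conjE) blast

lemma matching_cover: "is_matching P k M \<Longrightarrow> i < 2*k \<Longrightarrow> \<exists>!e. e \<in> M \<and> i \<in> e"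
  unfolding is_matching_def by (elim conjE) (erule allE, erule mp)

lemma matching_edge_obtain:
  assumes "is_matching P k M" "e \<in> M"
  obtains a b where "a < b" "b < 2*k" "e = {a, b}"
proof -
  obtain x y where xy: "e = {x, y}" "x \<noteq> y" and sub: "e \<subseteq> {0..<2*k}"
    using matching_edge[OF assms] by (auto simp: card_2_iff)
  show ?thesis
  proof (cases "x < y")
    case True
    then show ?thesis using that[of x y] xy sub by auto
  next
    case False
    then show ?thesis using that[of y x] xy sub by (auto simp: insert_commute)
  qed
qed

lemma matching_vertex_bound: "is_matching P k M \<Longrightarrow> e \<in> M \<Longrightarrow> v \<in> e \<Longrightarrow> v < 2*k"
  using matching_edge[of P k M e] by auto

lemma matching_edge_unique:
  assumes "is_matching P k M" "e \<in> M" "f \<in> M" "v \<in> e" "v \<in> f"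
  shows "e = f"
proof -
  have "v < 2*k" using matching_vertex_bound assms(1,2,4) .
  then have "\<exists>!e. e \<in> M \<and> v \<in> e"
    using assms(1) matching_cover by blast
  then show ?thesis using assms(2-5) by (elim ex1E) blast
qed

lemma matching_edge_neq: "is_matching P k M \<Longrightarrow> {v, w} \<in> M \<Longrightarrow> v \<noteq> w"
  using matching_edge[of P k M "{v, w}"] by auto

definition mate :: "nat set set \<Rightarrow> nat \<Rightarrow> nat" where
  "mate M v = (SOME w. {v, w} \<in> M)"

lemma
  assumes "is_matching P k M" "v < 2*k"
  shows mate_edge: "{v, mate M v} \<in> M"
    and mate_neq: "mate M v \<noteq> v"
    and mate_bound: "mate M v < 2*k"
proof -
  obtain e where e: "e \<in> M" "v \<in> e"
    using matching_cover[OF assms] by blast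
  obtain a b where "e = {a, b}"
    using matching_edge_obtain[OF assms(1) e(1)] by blast
  then have "\<exists>w. {v, w} \<in> M"
    using e by (auto simp: insert_commute)
  then show edge: "{v, mate M v} \<in> M"
    unfolding mate_def by (rule someI_ex)
  show "mate M v \<noteq> v" using matching_edge_neq[OF assms(1) edge] by simp
  show "mate M v < 2*k" using matching_vertex_bound[OF assms(1) edge] by simp
qed

lemma mate_eq:
  assumes "is_matching P k M" "{v, w} \<in> M"
  shows "mate M v = w"
proof -
  have v: "v < 2*k" using matching_vertex_bound assms by blast
  have "{v, mate M v} = {v, w}"
    using matching_edge_unique[OF assms(1) mate_edge[OF assms(1) v] assms(2), of v] by simp
  then show ?thesis
    using matching_edge_neq[OF assms] mate_neq[OF assms(1) v] by (auto simp: doubleton_eq_iff)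
qed

lemma mate_mate:
  assumes "is_matching P k M" "v < 2*k"
  shows "mate M (mate M v) = v"
proof -
  have "{mate M v, v} \<in> M" using mate_edge[OF assms] by (simp add: insert_commute)
  then show ?thesis by (rule mate_eq[OF assms(1)])
qed

lemma matching_edge_eq_mate:
  assumes "is_matching P k M" "e \<in> M" "v \<in> e"
  shows "e = {v, mate M v}"
  using matching_edge_unique[OF assms(1,2) mate_edge[OF assms(1) matching_vertex_bound[OF assms]]]
    assms(3) by simp

lemma card_Union_matching:
  assumes "is_matching P k M" "E \<subseteq> M"
  shows "card (\<Union>E) = 2 * card E"
proof -
  have edges: "card e = 2" if "e \<in> E" for e
    using matching_edge[OF assms(1)] assms(2) that by blast
  have "pairwise disjnt E"
    using matching_edge_unique[OF assms(1)] assms(2) by (auto simp: pairwise_def disjnt_def)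
  then have "card (\<Union>E) = sum card E"
    using edges by (intro card_Union_disjoint) (auto intro: card_ge_0_finite)
  also have "\<dots> = sum (\<lambda>_. 2) E"
    using edges by (intro sum.cong) auto
  also have "\<dots> = 2 * card E"
    by simp
  finally show ?thesis .
qed

lemma Union_matching_bound:
  assumes "is_matching P k M" "E \<subseteq> M"
  shows "\<Union>E \<subseteq> {..<2*k}" "finite (\<Union>E)"
proof -
  show bound: "\<Union>E \<subseteq> {..<2*k}"
    using matching_vertex_bound[OF assms(1)] assms(2) by blast
  show "finite (\<Union>E)" using finite_subset[OF bound] by simp
qed

section \<open>Flippable sets\<close>

lemma pairs_eq:
  "pairs N r s = (\<lambda>i. cyclic_pair (sorted_list_of_set (\<Union>N))
      ((2*i + s + r) mod length (sorted_list_of_set (\<Union>N)))) ` {..<card N}"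
proof -
  let ?ys = "sorted_list_of_set (\<Union>N)"
  have "Suc (2*i + s + r) = 2*i + s + 1 + r" for i by simp
  then have "{Qlab N r (2*i + s), Qlab N r (2*i + s + 1)} =
      cyclic_pair ?ys ((2*i + s + r) mod length ?ys)" for i
    unfolding Qlab_def Let_def csucc_def mod_Suc_eq by simp
  then show ?thesis unfolding pairs_def by auto
qed

locale flippable_set =
  fixes P :: "nat \<Rightarrow> real^2" and k :: nat and M N :: "nat set set"
  assumes matching: "is_matching P k M" and flippable: "flippable P M N"
begin

abbreviation "Y \<equiv> \<Union>N"
abbreviation "ys \<equiv> sorted_list_of_set Y"
abbreviation "L \<equiv> length ys"

lemma N_subset: "N \<subseteq> M" and card_N: "2 \<le> card N"
  using flippable unfolding flippable_def by auto

lemma Y_bound: "Y \<subseteq> {..<2*k}" and finite_Y: "finite Y"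
  using Union_matching_bound[OF matching N_subset] by auto

lemma set_ys: "set ys = Y"
  using finite_Y by simp

lemma sorted_ys: "sorted_wrt (<) ys"
  by (simp add: strict_sorted_list_of_set)

lemma L_eq: "L = 2 * card N"
  using card_Union_matching[OF matching N_subset] finite_Y by simp

lemma L_ge_4: "4 \<le> L"
  using L_eq card_N by simp

lemma ys_in_Y: "i < L \<Longrightarrow> ys ! i \<in> Y"
  using nth_mem set_ys by blast

lemma ys_index: "v \<in> Y \<Longrightarrow> \<exists>i<L. ys ! i = v"
  using set_ys by (metis in_set_conv_nth)

lemma ys_eq_iff: "i < L \<Longrightarrow> j < L \<Longrightarrow> ys ! i = ys ! j \<longleftrightarrow> i = j"
  using strict_sorted_nth_eq_iff[OF sorted_ys] by blast

lemma cyclic_pair_subset: "t < L \<Longrightarrow> cyclic_pair ys t \<subseteq> Y"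
  using ys_in_Y csucc_less[of L t] L_ge_4 by simp

lemma pairs_cyclic_pair:
  assumes "f \<in> pairs N r s"
  shows "\<exists>t<L. f = cyclic_pair ys t"
proof -
  from assms obtain i where "f = cyclic_pair ys ((2*i + s + r) mod L)"
    unfolding pairs_eq by auto
  moreover have "(2*i + s + r) mod L < L" using L_ge_4 by simp
  ultimately show ?thesis by blast
qed

lemma pairs_subset:
  assumes "f \<in> pairs N r s"
  shows "f \<subseteq> Y"
proof -
  obtain t where "t < L" "f = cyclic_pair ys t" using pairs_cyclic_pair[OF assms] by blast
  then show ?thesis using cyclic_pair_subset by simp
qed

lemma cyclic_pair_inj:
  assumes t: "t1 < L" "t2 < L" and eq: "cyclic_pair ys t1 = cyclic_pair ys t2"
  shows "t1 = t2"
proof -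
  have s: "csucc L t1 < L" "csucc L t2 < L" using csucc_less L_ge_4 by auto
  have "ys ! t1 = ys ! t2 \<or> ys ! t1 = ys ! csucc L t2 \<and> ys ! csucc L t1 = ys ! t2"
    using eq by (simp add: doubleton_eq_iff) meson
  then show ?thesis
  proof
    assume "ys ! t1 = ys ! t2"
    then show ?thesis using ys_eq_iff[OF t] by simp
  next
    assume "ys ! t1 = ys ! csucc L t2 \<and> ys ! csucc L t1 = ys ! t2"
    then have "t1 = csucc L t2" "csucc L t1 = t2"
      using ys_eq_iff[OF t(1) s(2)] ys_eq_iff[OF s(1) t(2)] by simp_all
    then show ?thesis using csucc_csucc_neq[of L t1] L_ge_4 t(1) by simp
  qed
qed

lemma cyclic_pair_in_pairs:
  assumes t: "t < L"
  shows "cyclic_pair ys t \<in> pairs N r 0 \<union> pairs N r 1"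
proof -
  obtain j where "(r mod L + j) mod L = t"
    using exists_mod_shift[OF _ t, of "r mod L"] L_ge_4 by auto
  then have j: "(j mod L + r) mod L = t"
    by (simp add: mod_add_left_eq mod_add_right_eq add.commute)
  define i s where "i = j mod L div 2" and "s = j mod L mod 2"
  have "j mod L < L" using L_ge_4 by simp
  then have "j mod L < card N * 2" using L_eq by linarith
  then have i: "i < card N" unfolding i_def by (rule less_mult_imp_div_less)
  have idx: "(2*i + s + r) mod L = t" using j unfolding i_def s_def by simp
  have "cyclic_pair ys t \<in> pairs N r s" unfolding pairs_eq
    by (rule image_eqI[of _ _ i]) (use i idx in simp_all)
  moreover have "s = 0 \<or> s = 1" unfolding s_def by auto
  ultimately show ?thesis by auto
qed

lemma pairs_0_1_disjoint: "pairs N r 0 \<inter> pairs N r 1 = {}"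
proof (rule ccontr)
  assume "pairs N r 0 \<inter> pairs N r 1 \<noteq> {}"
  then obtain e where "e \<in> pairs N r 0" "e \<in> pairs N r 1" by blast
  then obtain i j where "e = cyclic_pair ys ((2*i + 0 + r) mod L)" "e = cyclic_pair ys ((2*j + 1 + r) mod L)"
    unfolding pairs_eq by (elim imageE) blast
  then have "(2*i + 0 + r) mod L = (2*j + 1 + r) mod L"
    using cyclic_pair_inj[of "(2*i + 0 + r) mod L" "(2*j + 1 + r) mod L"] L_ge_4 by simp
  then have "(2*i + 0) mod L = (2*j + 1) mod L"
    by (rule mod_add_right_cancel_nat)
  then show False
    using even_mod_even_iff[of L "2*i + 0"] even_mod_even_iff[of L "2*j + 1"] L_eq by simp
qed

lemma flip_offset:
  obtains r where "pairs N r 0 = N" "pairs N r 1 = flip N"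
proof -
  have "\<exists>r. N = pairs N r 0" using flippable unfolding flippable_def by blast
  then have "N = pairs N (SOME r. N = pairs N r 0) 0" by (rule someI_ex)
  moreover have "flip N = pairs N (SOME r. N = pairs N r 0) 1" unfolding flip_def ..
  ultimately show thesis by (rule that[OF sym sym])
qed

lemma cyclic_pair_in_N_or_flip:
  assumes "t < L"
  shows "cyclic_pair ys t \<in> N \<union> flip N"
proof -
  obtain r where r: "pairs N r 0 = N" "pairs N r 1 = flip N" by (rule flip_offset)
  show ?thesis using cyclic_pair_in_pairs[OF assms, of r] unfolding r .
qed

lemma flip_subset:
  assumes "f \<in> flip N"
  shows "f \<subseteq> Y"
proof -
  obtain r where r: "pairs N r 0 = N" "pairs N r 1 = flip N" by (rule flip_offset)
  show ?thesis using pairs_subset[of f r 1] assms unfolding r by blast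
qed

lemma N_flip_disjoint: "N \<inter> flip N = {}"
proof -
  obtain r where r: "pairs N r 0 = N" "pairs N r 1 = flip N" by (rule flip_offset)
  show ?thesis using pairs_0_1_disjoint[of r] unfolding r .
qed

lemma cyclic_pair_of_N_or_flip:
  assumes "f \<in> N \<union> flip N"
  shows "\<exists>t<L. f = cyclic_pair ys t"
proof -
  obtain r where r: "pairs N r 0 = N" "pairs N r 1 = flip N" by (rule flip_offset)
  show ?thesis using pairs_cyclic_pair[of f r 0] pairs_cyclic_pair[of f r 1] assms unfolding r by blast
qed

lemma cyclic_pair_not_crosses:
  assumes cc: "convex_clockwise P k" and t: "t < L"
    and f: "f = {c, d}" "f \<subseteq> Y" "c \<noteq> d" "f \<noteq> cyclic_pair ys t"
  shows "\<not> crosses P (cyclic_pair ys t) f"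
proof -
  obtain a b where ab: "a < b" "cyclic_pair ys t = {a, b}"
    and side: "(\<forall>v\<in>set ys. v \<le> a \<or> b \<le> v) \<or> (\<forall>v\<in>set ys. a \<le> v \<and> v \<le> b)"
    using strict_sorted_cyclic_pair_side[OF sorted_ys _ t] L_ge_4 by auto
  have "b < 2*k" "c < 2*k" "d < 2*k"
    using ab(2) cyclic_pair_subset[OF t] f Y_bound by auto
  moreover have "(\<forall>v\<in>{c, d}. v \<le> a \<or> b \<le> v) \<or> (\<forall>v\<in>{c, d}. a \<le> v \<and> v \<le> b)"
    using side f set_ys by blast
  ultimately show ?thesis
    using not_crosses_one_side[OF cc ab(1)] f ab(2) by simp
qed

lemma N_flip_not_crosses:
  assumes cc: "convex_clockwise P k" and "e \<in> N" "f \<in> flip N"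
  shows "\<not> crosses P e f"
proof -
  obtain t where t: "t < L" "e = cyclic_pair ys t"
    using cyclic_pair_of_N_or_flip assms(2) by blast
  obtain s where s: "s < L" "f = cyclic_pair ys s"
    using cyclic_pair_of_N_or_flip assms(3) by blast
  have "ys ! s \<noteq> ys ! csucc L s"
    using ys_eq_iff[OF s(1) csucc_less] csucc_neq[of L s] L_ge_4 s(1) by simp
  moreover have "f \<noteq> e"
    using N_flip_disjoint assms(2,3) by blast
  ultimately show ?thesis
    using cyclic_pair_not_crosses[OF cc t(1) s(2)] flip_subset[OF assms(3)] t(2) by simp
qed

text \<open>The cyclic pairs of consecutive endpoints, which make up N \<union> flip N, form a single cycle
  through all of Y.\<close>
lemma endpoints_connected:
  assumes closed: "\<And>f v. f \<in> N \<union> flip N \<Longrightarrow> v \<in> f \<Longrightarrow> v \<in> S \<Longrightarrow> f \<subseteq> S"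
    and y: "y \<in> Y" "y \<in> S"
  shows "Y \<subseteq> S"
proof
  fix v assume "v \<in> Y"
  then obtain t where t: "t < L" "ys ! t = v" using ys_index by blast
  obtain t0 where t0: "t0 < L" "ys ! t0 = y" using ys_index y by blast
  have "ys ! ((t0 + j) mod L) \<in> S" for j
  proof (induction j)
    case 0
    then show ?case using t0 y by simp
  next
    case (Suc j)
    have "cyclic_pair ys ((t0 + j) mod L) \<in> N \<union> flip N"
      using cyclic_pair_in_N_or_flip L_ge_4 by simp
    then have "ys ! csucc L ((t0 + j) mod L) \<in> S" using closed Suc by blast
    then show ?case by (simp add: csucc_mod)
  qed
  then show "v \<in> S" using exists_mod_shift[OF t0(1) t(1)] t by auto
qed

end

section \<open>Partitions into flippable sets\<close>

locale good_partition_of =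
  fixes P :: "nat \<Rightarrow> real^2" and k :: nat and M M' :: "nat set set" and Pt :: "nat set set set"
  assumes matching: "is_matching P k M" and matching': "is_matching P k M'"
    and good: "good_partition P M M' Pt"
begin

lemma Union_parts: "\<Union>Pt = M"
  and empty_not_part: "{} \<notin> Pt"
  and parts_disjoint: "N1 \<in> Pt \<Longrightarrow> N2 \<in> Pt \<Longrightarrow> N1 \<noteq> N2 \<Longrightarrow> N1 \<inter> N2 = {}"
  and part_flippable: "N \<in> Pt \<Longrightarrow> flippable P M N"
  and part_hulls_disjoint: "N1 \<in> Pt \<Longrightarrow> N2 \<in> Pt \<Longrightarrow> N1 \<noteq> N2 \<Longrightarrow>
        convex hull (P ` \<Union>N1) \<inter> convex hull (P ` \<Union>N2) = {}"
  and M'_eq: "M' = \<Union>(flip ` Pt)"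
  using good unfolding good_partition_def by auto

lemma part_subset: "N \<in> Pt \<Longrightarrow> N \<subseteq> M"
  using Union_parts by blast

lemma flip_part_subset: "N \<in> Pt \<Longrightarrow> flip N \<subseteq> M'"
  unfolding M'_eq by blast

lemma part_flippable_set: "N \<in> Pt \<Longrightarrow> flippable_set P k M N"
  using matching part_flippable by (simp add: flippable_set_def)

lemma part_of_vertex_unique:
  assumes "N1 \<in> Pt" "N2 \<in> Pt" "v \<in> \<Union>N1" "v \<in> \<Union>N2"
  shows "N1 = N2"
proof -
  obtain e1 e2 where e: "e1 \<in> N1" "v \<in> e1" "e2 \<in> N2" "v \<in> e2"
    using assms(3,4) by blast
  then have "e1 = e2"
    using matching_edge_unique[OF matching] Union_parts assms(1,2) by blast
  then show ?thesis
    using parts_disjoint e assms(1,2) by blast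
qed

lemma part_closed:
  assumes "N \<in> Pt" "f \<in> M \<union> M'" "v \<in> f" "v \<in> \<Union>N"
  shows "f \<subseteq> \<Union>N"
proof -
  obtain N' where N': "N' \<in> Pt" "f \<subseteq> \<Union>N'"
    using assms(2) Union_parts M'_eq flippable_set.flip_subset part_flippable_set by blast
  then have "N' = N"
    using part_of_vertex_unique assms by blast
  then show ?thesis using N' by simp
qed

lemma part_eq_edges_within:
  assumes "N \<in> Pt"
  shows "N = {e \<in> M. e \<subseteq> \<Union>N}"
proof
  show "N \<subseteq> {e \<in> M. e \<subseteq> \<Union>N}" using assms Union_parts by blast
  show "{e \<in> M. e \<subseteq> \<Union>N} \<subseteq> N"
  proof clarify
    fix e assume e: "e \<in> M" "e \<subseteq> \<Union>N"
    obtain a b where "e = {a, b}" using matching_edge_obtain[OF matching e(1)] by blast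
    then obtain e' where "e' \<in> N" "a \<in> e'" using e(2) by blast
    then show "e \<in> N"
      using matching_edge_unique[OF matching e(1)] \<open>e = {a, b}\<close> assms Union_parts by blast
  qed
qed

lemma edges_in_parts:
  assumes "e \<in> M" "f \<in> M'"
  obtains N1 N2 where "N1 \<in> Pt" "N2 \<in> Pt" "e \<in> N1" "f \<in> flip N2"
proof -
  have "e \<in> \<Union>Pt" "f \<in> \<Union>(flip ` Pt)" using assms Union_parts M'_eq by simp_all
  then show ?thesis using that by blast
qed

lemma matchings_disjoint: "M \<inter> M' = {}"
proof (rule ccontr)
  assume "M \<inter> M' \<noteq> {}"
  then obtain f where "f \<in> M" "f \<in> M'" by blast
  then obtain N1 N2 where f: "N1 \<in> Pt" "N2 \<in> Pt" "f \<in> N1" "f \<in> flip N2"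
    by (rule edges_in_parts)
  obtain a b where "f = {a, b}"
    using matching_edge_obtain[OF matching] f(3) part_subset[OF f(1)] by blast
  then have "N1 = N2"
    using part_of_vertex_unique[OF f(1,2)] flippable_set.flip_subset[OF part_flippable_set[OF f(2)] f(4)] f(3)
    by blast
  then show False
    using flippable_set.N_flip_disjoint[OF part_flippable_set[OF f(2)]] f by blast
qed

lemma matchings_not_cross:
  assumes cc: "convex_clockwise P k" and ef: "e \<in> M" "f \<in> M'"
  shows "\<not> crosses P e f"
proof -
  obtain N1 N2 where N: "N1 \<in> Pt" "N2 \<in> Pt" "e \<in> N1" "f \<in> flip N2"
    using ef by (rule edges_in_parts)
  show ?thesis
  proof (cases "N1 = N2")
    case True
    then show ?thesis
      using flippable_set.N_flip_not_crosses[OF part_flippable_set[OF N(2)] cc] N by blast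
  next
    case False
    have "seg P e \<subseteq> convex hull (P ` \<Union>N1)" "seg P f \<subseteq> convex hull (P ` \<Union>N2)"
      using N flippable_set.flip_subset[OF part_flippable_set[OF N(2)] N(4)]
      unfolding seg_def by (auto intro!: hull_mono)
    then show ?thesis
      using part_hulls_disjoint[OF N(1,2) False] unfolding crosses_def by blast
  qed
qed

end

lemma good_partition_subset:
  assumes "is_matching P k M" "is_matching P k M'"
    and "good_partition P M M' Pt1" "good_partition P M M' Pt2"
  shows "Pt1 \<subseteq> Pt2"
proof
  interpret A: good_partition_of P k M M' Pt1 using assms by (simp add: good_partition_of_def)
  interpret B: good_partition_of P k M M' Pt2 using assms by (simp add: good_partition_of_def)
  fix N1 assume N1: "N1 \<in> Pt1"
  obtain e where e: "e \<in> N1" using A.empty_not_part N1 by fastforce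
  then have "e \<in> \<Union>Pt2" using A.part_subset[OF N1] B.Union_parts by auto
  then obtain N2 where N2: "N2 \<in> Pt2" "e \<in> N2" by blast
  obtain a b where "e = {a, b}"
    using matching_edge_obtain[OF assms(1)] e A.part_subset[OF N1] by blast
  then have a: "a \<in> \<Union>N1" "a \<in> \<Union>N2" using e N2 by auto
  have flip_in_M': "N \<union> flip N \<subseteq> M \<union> M'" if "N \<in> Pt1 \<or> N \<in> Pt2" for N
    using that A.part_subset A.flip_part_subset B.part_subset B.flip_part_subset by blast
  have "\<Union>N1 \<subseteq> \<Union>N2"
  proof (rule flippable_set.endpoints_connected[OF A.part_flippable_set[OF N1] _ a])
    fix f v assume "f \<in> N1 \<union> flip N1" "v \<in> f" "v \<in> \<Union>N2"
    then show "f \<subseteq> \<Union>N2" using B.part_closed[OF N2(1)] flip_in_M'[of N1] N1 by blast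
  qed
  moreover have "\<Union>N2 \<subseteq> \<Union>N1"
  proof (rule flippable_set.endpoints_connected[OF B.part_flippable_set[OF N2(1)] _ a(2,1)])
    fix f v assume "f \<in> N2 \<union> flip N2" "v \<in> f" "v \<in> \<Union>N1"
    then show "f \<subseteq> \<Union>N1" using A.part_closed[OF N1] flip_in_M'[of N2] N2(1) by blast
  qed
  ultimately have "N1 = N2"
    using A.part_eq_edges_within[OF N1] B.part_eq_edges_within[OF N2(1)] by simp
  then show "N1 \<in> Pt2" using N2 by simp
qed

lemma good_partition_disjoint_compatible:
  assumes cc: "convex_clockwise P k" and "is_matching P k M" "is_matching P k M'"
    and "good_partition P M M' Pt"
  shows "disjoint_compatible P M M'"
proof -
  interpret good_partition_of P k M M' Pt using assms by (simp add: good_partition_of_def)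
  show ?thesis
    unfolding disjoint_compatible_def using matchings_disjoint matchings_not_cross[OF cc] by blast
qed

section \<open>Alternating cycles of two compatible matchings\<close>

lemma even_card_involution:
  assumes "finite S" "\<And>x. x \<in> S \<Longrightarrow> f x \<in> S \<and> f x \<noteq> x \<and> f (f x) = x"
  shows "even (card S)"
  using assms
proof (induction "card S" arbitrary: S rule: less_induct)
  case less
  show ?case
  proof (cases "S = {}")
    case False
    then obtain x where x: "x \<in> S" by blast
    define S' where "S' = S - {x, f x}"
    have fx: "f x \<in> S" "f x \<noteq> x" using less.prems(2)[OF x] by auto
    then have card_S: "card S = card S' + 2"
      unfolding S'_def using x less.prems(1) card_Diff_subset[of "{x, f x}" S] card_mono[of S "{x, f x}"]
      by simp
    have "even (card S')"
    proof (rule less.hyps)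
      show "card S' < card S" "finite S'" using card_S less.prems(1) unfolding S'_def by auto
      fix y assume "y \<in> S'"
      then have y: "y \<in> S" "y \<noteq> x" "y \<noteq> f x" unfolding S'_def by auto
      have fy: "f y \<in> S \<and> f y \<noteq> y \<and> f (f y) = y" using less.prems(2)[OF y(1)] .
      have "f y \<noteq> x" "f y \<noteq> f x" using fy y less.prems(2)[OF x] by metis+
      then show "f y \<in> S' \<and> f y \<noteq> y \<and> f (f y) = y"
        using fy unfolding S'_def by simp
    qed
    then show ?thesis using card_S by simp
  qed simp
qed

definition component :: "nat set set \<Rightarrow> nat set set \<Rightarrow> nat \<Rightarrow> nat set" where
  "component M M' a = {v. (a, v) \<in> {(u, w). {u, w} \<in> M \<union> M'}\<^sup>*}"

lemma component_commute: "component M M' = component M' M"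
  unfolding component_def by (simp add: Un_commute)

definition component_partition :: "nat \<Rightarrow> nat set set \<Rightarrow> nat set set \<Rightarrow> nat set set set" where
  "component_partition k M M' = (\<lambda>a. {e \<in> M. e \<subseteq> component M M' a}) ` {..<2*k}"

locale compatible_pair =
  fixes P :: "nat \<Rightarrow> real^2" and k :: nat and M M' :: "nat set set"
  assumes cc: "convex_clockwise P k"
    and matching: "is_matching P k M" and matching': "is_matching P k M'"
    and disjoint: "M \<inter> M' = {}" and not_crosses: "\<And>e f. e \<in> M \<Longrightarrow> f \<in> M' \<Longrightarrow> \<not> crosses P e f"
begin

lemma swap: "compatible_pair P k M' M"
proof unfold_locales
  show "\<not> crosses P f e" if "f \<in> M'" "e \<in> M" for e f
    using not_crosses[OF that(2,1)] crosses_commute[of P e f] by simp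
qed (use cc matching matching' disjoint in auto)

abbreviation C where "C \<equiv> component M M'"

lemma edge_bounds:
  assumes "{u, v} \<in> M \<union> M'"
  shows "u < 2*k" "v < 2*k" "u \<noteq> v"
  using assms matching_vertex_bound[OF matching, of "{u, v}"] matching_vertex_bound[OF matching', of "{u, v}"]
    matching_edge_neq[OF matching, of u v] matching_edge_neq[OF matching', of u v] by auto

lemma edge_doubleton:
  assumes "f \<in> M \<union> M'"
  obtains x y where "x < y" "f = {x, y}"
proof (cases "f \<in> M")
  case True
  then show ?thesis using matching_edge_obtain[OF matching] that by blast
next
  case False
  then have "f \<in> M'" using assms by simp
  then show ?thesis using matching_edge_obtain[OF matching'] that by blast
qed

lemma edges_not_cross:
  assumes e: "e \<in> M \<union> M'" and f: "f \<in> M \<union> M'" and ef: "e \<inter> f = {}"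
  shows "\<not> crosses P e f"
proof -
  obtain x y where "x < y" "e = {x, y}" using edge_doubleton[OF e] .
  then have "e \<noteq> {}" by simp
  then have ef': "e \<noteq> f" using ef by auto
  show ?thesis
  proof (cases "e \<in> M")
    case True
    then show ?thesis
      using f ef' matching_not_crosses[OF matching] not_crosses by blast
  next
    case False
    then have "e \<in> M'" using e by simp
    then show ?thesis
      using f ef' matching_not_crosses[OF matching'] not_crosses[of f e] crosses_commute[of P e f] by auto
  qed
qed

lemma edge_not_interleaved:
  assumes g: "{c, d} \<in> M \<union> M'" and cd: "c < d"
    and h: "{v, w} \<in> M \<union> M'" and dis: "{v, w} \<inter> {c, d} = {}"
  shows "(c < v \<and> v < d) \<longleftrightarrow> (c < w \<and> w < d)"
proof (rule ccontr)
  assume "\<not> ?thesis"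
  then have "crosses P {c, d} {v, w}"
    using crosses_if_interleaved[OF cc cd edge_bounds(2)[OF g] edge_bounds(1,2)[OF h]] dis by auto
  then show False
    using edges_not_cross[OF g h] dis by (simp add: Int_commute)
qed

lemma component_self: "a \<in> C a"
  unfolding component_def by simp

lemma component_closed: "v \<in> C a \<Longrightarrow> {v, w} \<in> M \<union> M' \<Longrightarrow> w \<in> C a"
  unfolding component_def by (auto intro: rtrancl_into_rtrancl)

lemma edge_within_own_component: "{x, y} \<in> M \<union> M' \<Longrightarrow> {x, y} \<subseteq> C x"
  using component_self component_closed by blast

lemma mate_in_component:
  assumes "v \<in> C a" "v < 2*k"
  shows "mate M v \<in> C a" "mate M' v \<in> C a"
  using component_closed[OF assms(1)] mate_edge[OF matching assms(2)] mate_edge[OF matching' assms(2)]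
  by auto

lemma component_subset:
  assumes a: "a \<in> S" "a < 2*k"
    and closed: "\<And>v. v \<in> C a \<Longrightarrow> v \<in> S \<Longrightarrow> v < 2*k \<Longrightarrow> mate M v \<in> S \<and> mate M' v \<in> S"
  shows "C a \<subseteq> S"
proof
  fix v assume "v \<in> C a"
  then have "(a, v) \<in> {(u, w). {u, w} \<in> M \<union> M'}\<^sup>*" unfolding component_def by simp
  then have "v \<in> S \<and> v < 2*k"
  proof (induction rule: rtrancl_induct)
    case (step u v)
    then have u: "u \<in> C a" "{u, v} \<in> M \<union> M'" unfolding component_def by auto
    then have "v = mate M u \<or> v = mate M' u"
      using mate_eq[OF matching, of u v] mate_eq[OF matching', of u v] by auto
    then show ?case using step.IH closed[OF u(1)] edge_bounds(2)[OF u(2)] by auto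
  qed (use a in simp)
  then show "v \<in> S" by simp
qed

lemma component_bound: "a < 2*k \<Longrightarrow> C a \<subseteq> {..<2*k}"
  by (rule component_subset) (use mate_bound[OF matching] mate_bound[OF matching'] in auto)

lemma component_eq:
  assumes "b \<in> C a"
  shows "C b = C a"
proof -
  let ?R = "{(u, w). {u, w} \<in> M \<union> M'}"
  have ab: "(a, b) \<in> ?R\<^sup>*" using assms unfolding component_def by simp
  have "sym (?R\<^sup>*)" by (intro sym_rtrancl symI) (auto simp: insert_commute)
  then have ba: "(b, a) \<in> ?R\<^sup>*" using ab by (rule symD)
  show ?thesis
    unfolding component_def using rtrancl_trans[OF ab] rtrancl_trans[OF ba] by blast
qed

lemma mate_stays_inside_chord:
  assumes g: "{u, w} \<in> M \<union> M'" and uw: "u < w" and X: "X = M \<or> X = M'"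
    and v: "v \<in> {u<..<w}" and m: "mate X v \<notin> {u, w}"
  shows "mate X v \<in> {u<..<w}"
proof -
  have "v < 2*k" using v edge_bounds(2)[OF g] by auto
  then have "{v, mate X v} \<in> M \<union> M'"
    using mate_edge[OF matching] mate_edge[OF matching'] X by auto
  then show ?thesis
    using edge_not_interleaved[OF g uw, of v "mate X v"] v m by auto
qed

lemma M_mate_inside_chord:
  assumes g: "{u, w} \<in> M" and uw: "u < w" and v: "v \<in> {u<..<w}"
  shows "mate M v \<in> {u<..<w}"
proof (rule mate_stays_inside_chord[of u w M v])
  have "v < 2*k" using v edge_bounds(2)[of u w] g by auto
  then have "mate M (mate M v) = v" using mate_mate[OF matching] by blast
  moreover have "mate M u = w" "mate M w = u"
    using mate_eq[OF matching] g by (auto simp: insert_commute)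
  ultimately show "mate M v \<notin> {u, w}" using v by auto
qed (use assms in auto)

lemma even_card_chord_interior:
  assumes "{u, w} \<in> M" "u < w"
  shows "even (card {u<..<w})"
proof (rule even_card_involution)
  show "finite {u<..<w}" by simp
next
  fix v assume v: "v \<in> {u<..<w}"
  then have "v < 2*k" using edge_bounds(2)[of u w] assms by auto
  then show "mate M v \<in> {u<..<w} \<and> mate M v \<noteq> v \<and> mate M (mate M v) = v"
    using M_mate_inside_chord[OF assms v] mate_neq[OF matching] mate_mate[OF matching] by auto
qed

text \<open>Parity: M pairs up the vertices strictly inside an M-chord, and so does M' except for
  the M'-mates of its two ends.\<close>
lemma M'_mates_same_side:
  assumes g: "{u, w} \<in> M" and uw: "u < w"
  shows "mate M' u \<in> {u<..<w} \<longleftrightarrow> mate M' w \<in> {u<..<w}"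
proof -
  define I where "I = {u<..<w}"
  define x1 x2 where "x1 = mate M' u" and "x2 = mate M' w"
  have u: "u < 2*k" and w: "w < 2*k" using edge_bounds[of u w] g by auto
  have I_bound: "v < 2*k" if "v \<in> I" for v using that w unfolding I_def by auto
  have mates: "mate M' x1 = u" "mate M' x2 = w"
    unfolding x1_def x2_def using mate_mate[OF matching'] u w by auto
  define A where "A = {v \<in> I. mate M' v \<in> I}"
  have AI: "A \<subseteq> I" and fin: "finite I" unfolding A_def I_def by auto
  have "even (card A)"
  proof (rule even_card_involution)
    show "finite A" using finite_subset[OF AI fin] .
  next
    fix v assume "v \<in> A"
    then show "mate M' v \<in> A \<and> mate M' v \<noteq> v \<and> mate M' (mate M' v) = v"
      unfolding A_def using I_bound mate_neq[OF matching'] mate_mate[OF matching'] by auto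
  qed
  moreover have "I - A = I \<inter> {x1, x2}"
  proof
    show "I - A \<subseteq> I \<inter> {x1, x2}"
    proof
      fix v assume v: "v \<in> I - A"
      then have "mate M' v \<in> {u, w}"
        using mate_stays_inside_chord[of u w M' v] g uw unfolding A_def I_def by auto
      then show "v \<in> I \<inter> {x1, x2}"
        using v mate_mate[OF matching' I_bound] unfolding x1_def x2_def by auto
    qed
    show "I \<inter> {x1, x2} \<subseteq> I - A" using mates unfolding A_def I_def by auto
  qed
  moreover have "card I = card A + card (I - A)"
    using card_Diff_subset[OF finite_subset[OF AI fin] AI] card_mono[OF fin AI] by simp
  moreover have "even (card I)" using even_card_chord_interior[OF g uw] unfolding I_def .
  moreover have "x1 \<noteq> x2" using mates uw by auto
  ultimately have "x1 \<in> I \<longleftrightarrow> x2 \<in> I"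
    by (cases "x1 \<in> I"; cases "x2 \<in> I") auto
  then show ?thesis unfolding I_def x1_def x2_def .
qed

lemma component_avoids_chord_interior:
  assumes g: "{u, w} \<in> M" and uw: "u < w" and out: "mate M' u \<notin> {u<..<w}"
  shows "C u \<inter> {u<..<w} = {}"
proof -
  have u: "u < 2*k" using edge_bounds[of u w] g by auto
  have outside: "mate M' u \<notin> {u<..<w}" "mate M' w \<notin> {u<..<w}"
    using out M'_mates_same_side[OF g uw] by auto
  have "C u \<subseteq> - {u<..<w}"
  proof (rule component_subset)
    fix v assume v: "v \<in> C u" "v \<in> - {u<..<w}" "v < 2*k"
    have "mate M v \<notin> {u<..<w}"
      using M_mate_inside_chord[OF g uw, of "mate M v"] mate_mate[OF matching v(3)] v(2) by auto
    moreover have "mate M' v \<notin> {u<..<w}"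
    proof
      assume inside: "mate M' v \<in> {u<..<w}"
      have "mate M' (mate M' v) = v" using mate_mate[OF matching' v(3)] .
      then have "v \<in> {u, w}"
        using mate_stays_inside_chord[of u w M' "mate M' v"] g uw inside v(2) by auto
      then show False using outside inside by auto
    qed
    ultimately show "mate M v \<in> - {u<..<w} \<and> mate M' v \<in> - {u<..<w}" by simp
  qed (use u in auto)
  then show ?thesis by auto
qed

lemma component_within_chord:
  assumes g: "{u, w} \<in> M" and uw: "u < w" and "mate M' u \<in> {u<..<w}"
  shows "C u \<subseteq> {u..w}"
proof (rule component_subset)
  have mates: "mate M u = w" "mate M w = u"
    using mate_eq[OF matching] g by (auto simp: insert_commute)
  have inside: "mate M' u \<in> {u<..<w}" "mate M' w \<in> {u<..<w}"
    using assms M'_mates_same_side[OF g uw] by auto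
  fix v assume v: "v \<in> C u" "v \<in> {u..w}" "v < 2*k"
  show "mate M v \<in> {u..w} \<and> mate M' v \<in> {u..w}"
  proof (cases "v = u \<or> v = w")
    case True
    then show ?thesis using mates inside uw by auto
  next
    case False
    then have "v \<in> {u<..<w}" using v by auto
    then show ?thesis
      using M_mate_inside_chord[OF g uw] mate_stays_inside_chord[of u w M' v] g uw by fastforce
  qed
qed (use uw edge_bounds[of u w] g in auto)

lemma component_M_chord:
  assumes "{u, w} \<in> M" "u < w"
  shows "C u \<inter> {u<..<w} = {} \<or> C u \<subseteq> {u..w}"
  using component_avoids_chord_interior[OF assms] component_within_chord[OF assms] by blast

lemma component_chord:
  assumes "{x, y} \<in> M \<union> M'" "x < y"
  shows "C x \<inter> {x<..<y} = {} \<or> C x \<subseteq> {x..y}"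
proof (cases "{x, y} \<in> M")
  case True
  then show ?thesis using component_M_chord assms(2) by simp
next
  case False
  then have "{x, y} \<in> M'" using assms(1) by simp
  then show ?thesis
    using compatible_pair.component_M_chord[OF swap _ assms(2)] component_commute by metis
qed

lemma component_one_side:
  assumes g: "{c, d} \<in> M \<union> M'" and cd: "c < d" and a: "a < 2*k" and dis: "C a \<inter> {c, d} = {}"
  shows "C a \<subseteq> {c<..<d} \<or> C a \<inter> {c<..<d} = {}"
proof -
  let ?S = "{v. (c < v \<and> v < d) \<longleftrightarrow> (c < a \<and> a < d)}"
  have "C a \<subseteq> ?S"
  proof (rule component_subset)
    fix v assume v: "v \<in> C a" "v \<in> ?S" "v < 2*k"
    have "(c < v \<and> v < d) \<longleftrightarrow> (c < mate X v \<and> mate X v < d)" if X: "X = M \<or> X = M'" for X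
    proof -
      have e: "{v, mate X v} \<in> M \<union> M'"
        using mate_edge[OF matching v(3)] mate_edge[OF matching' v(3)] X by auto
      then have "mate X v \<in> C a" using component_closed[OF v(1)] by blast
      then show ?thesis using edge_not_interleaved[OF g cd e] dis v(1) by auto
    qed
    then show "mate M v \<in> ?S \<and> mate M' v \<in> ?S" using v(2) by auto
  qed (use a in auto)
  then show ?thesis by (cases "c < a \<and> a < d") auto
qed

end

locale compatible_component = compatible_pair +
  fixes a :: nat
  assumes a_bound: "a < 2*k"
begin

abbreviation "Ca \<equiv> C a"
abbreviation "cs \<equiv> sorted_list_of_set Ca"
abbreviation "n \<equiv> length cs"
abbreviation "MC \<equiv> {e \<in> M. e \<subseteq> Ca}"
abbreviation "MC' \<equiv> {e \<in> M'. e \<subseteq> Ca}"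

lemma Ca_bound: "v \<in> Ca \<Longrightarrow> v < 2*k"
  using component_bound[OF a_bound] by auto

lemma finite_Ca: "finite Ca"
  using component_bound[OF a_bound] finite_subset by blast

lemma set_cs: "set cs = Ca"
  using finite_Ca by simp

lemma sorted_cs: "sorted_wrt (<) cs"
  by (simp add: strict_sorted_list_of_set)

lemma cs_in: "i < n \<Longrightarrow> cs ! i \<in> Ca"
  using nth_mem set_cs by blast

lemma cs_index: "v \<in> Ca \<Longrightarrow> \<exists>i<n. cs ! i = v"
  using set_cs by (metis in_set_conv_nth)

lemma cs_eq_iff: "i < n \<Longrightarrow> j < n \<Longrightarrow> cs ! i = cs ! j \<longleftrightarrow> i = j"
  using strict_sorted_nth_eq_iff[OF sorted_cs] by blast

lemma Union_MC: "\<Union>MC = Ca"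
proof
  show "Ca \<subseteq> \<Union>MC"
  proof
    fix v assume v: "v \<in> Ca"
    then have "{v, mate M v} \<in> MC"
      using mate_edge[OF matching Ca_bound[OF v]] mate_in_component(1)[OF v Ca_bound[OF v]] by simp
    then show "v \<in> \<Union>MC" by blast
  qed
qed blast

lemma n_eq: "n = 2 * card MC"
  using card_Union_matching[OF matching, of MC] Union_MC by simp

lemma n_ge_4: "4 \<le> n"
proof -
  have "mate M a \<noteq> mate M' a"
    using mate_edge[OF matching a_bound] mate_edge[OF matching' a_bound] disjoint by auto
  then have "card {a, mate M a, mate M' a} = 3"
    using mate_neq[OF matching a_bound] mate_neq[OF matching' a_bound] by auto
  moreover have "card {a, mate M a, mate M' a} \<le> n"
    using component_self mate_in_component[OF component_self a_bound] finite_Ca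
    by (simp add: card_mono)
  ultimately show ?thesis using n_eq by presburger
qed

lemma cyclic_pair_subset: "t < n \<Longrightarrow> cyclic_pair cs t \<subseteq> Ca"
  using cs_in csucc_less[of n t] n_ge_4 by simp

lemma edge_indices_adjacent_less:
  assumes e: "{x, y} \<in> M \<union> M'" and x: "x \<in> Ca" and xy: "x < y"
    and p: "p < n" "cs ! p = x" and q: "q < n" "cs ! q = y"
  shows "q = csucc n p \<or> p = csucc n q"
proof -
  have pq: "p < q" using strict_sorted_nth_less_iff[OF sorted_cs p(1) q(1)] p q xy by simp
  have "Ca \<inter> {x<..<y} = {} \<or> Ca \<subseteq> {x..y}"
    using component_chord[OF e xy] component_eq[OF x] by simp
  then show ?thesis
  proof
    assume gap: "Ca \<inter> {x<..<y} = {}"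
    have "\<not> Suc p < q"
    proof
      assume "Suc p < q"
      then have "x < cs ! Suc p" "cs ! Suc p < y" "cs ! Suc p \<in> Ca"
        using strict_sorted_nth_less_iff[OF sorted_cs] p q cs_in by auto
      then show False using gap by auto
    qed
    then show ?thesis using pq q(1) csucc_of_less[of p n] by simp
  next
    assume span: "Ca \<subseteq> {x..y}"
    have "cs ! 0 \<in> Ca" "cs ! (n - 1) \<in> Ca" using cs_in n_ge_4 by auto
    then have "\<not> cs ! 0 < cs ! p" "\<not> cs ! q < cs ! (n - 1)"
      using span p q by auto
    then have "p = 0" "q = n - 1"
      using strict_sorted_nth_less_iff[OF sorted_cs, of 0 p] strict_sorted_nth_less_iff[OF sorted_cs, of q "n - 1"]
        p(1) q(1) n_ge_4 by auto
    then show ?thesis using csucc_last[of n] n_ge_4 by simp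
  qed
qed

lemma edge_indices_adjacent:
  assumes e: "{x, y} \<in> M \<union> M'" and x: "x \<in> Ca"
    and p: "p < n" "cs ! p = x" and q: "q < n" "cs ! q = y"
  shows "q = csucc n p \<or> p = csucc n q"
proof (cases "x < y")
  case True
  then show ?thesis using edge_indices_adjacent_less[OF e x True p q] by simp
next
  case False
  then have "y < x" using edge_bounds(3)[OF e] by simp
  moreover have "{y, x} \<in> M \<union> M'" using e by (simp add: insert_commute)
  moreover have "y \<in> Ca" using component_closed[OF x e] .
  ultimately show ?thesis using edge_indices_adjacent_less[OF _ _ _ q p] by blast
qed

lemma edge_within_is_cyclic_pair:
  assumes f: "f \<in> M \<union> M'" "f \<subseteq> Ca"
  shows "\<exists>s<n. f = cyclic_pair cs s"
proof -
  obtain x y where xy: "x < y" "f = {x, y}" using edge_doubleton[OF f(1)] .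
  then have x: "x \<in> Ca" "y \<in> Ca" using f(2) by auto
  obtain p where p: "p < n" "cs ! p = x" using cs_index[OF x(1)] by blast
  obtain q where q: "q < n" "cs ! q = y" using cs_index[OF x(2)] by blast
  have "q = csucc n p \<or> p = csucc n q"
    using edge_indices_adjacent[OF _ x(1) p q] f(1) xy(2) by simp
  then show ?thesis
    using p q xy(2) by (auto simp: insert_commute)
qed

lemma cyclic_pair_in_M_or_M':
  assumes t: "t < n"
  shows "cyclic_pair cs t \<in> M \<or> cyclic_pair cs t \<in> M'"
proof -
  define v where "v = cs ! t"
  have v: "v \<in> Ca" "v < 2*k" unfolding v_def using cs_in[OF t] Ca_bound by auto
  have edges: "{v, mate M v} \<in> M" "{v, mate M' v} \<in> M'"
    using mate_edge[OF matching v(2)] mate_edge[OF matching' v(2)] by auto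
  then have mates_neq: "mate M v \<noteq> mate M' v" using disjoint by auto
  obtain q1 where q1: "q1 < n" "cs ! q1 = mate M v"
    using cs_index mate_in_component(1)[OF v] by blast
  obtain q2 where q2: "q2 < n" "cs ! q2 = mate M' v"
    using cs_index mate_in_component(2)[OF v] by blast
  have "q1 = csucc n t \<or> t = csucc n q1"
    using edge_indices_adjacent[OF _ v(1) t v_def[symmetric] q1] edges(1) by simp
  moreover have "q2 = csucc n t \<or> t = csucc n q2"
    using edge_indices_adjacent[OF _ v(1) t v_def[symmetric] q2] edges(2) by simp
  moreover have "q1 \<noteq> q2" using q1 q2 mates_neq by auto
  ultimately have "q1 = csucc n t \<or> q2 = csucc n t"
    using csucc_inj[OF q1(1) q2(1)] by metis
  then show ?thesis using edges q1 q2 unfolding v_def by auto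
qed

lemma cyclic_pairs_not_both:
  assumes X: "is_matching P k X" and t: "t < n"
    and in_X: "cyclic_pair cs t \<in> X" "cyclic_pair cs (csucc n t) \<in> X"
  shows False
proof -
  have t1: "csucc n t < n" "csucc n (csucc n t) < n" using csucc_less n_ge_4 by auto
  have "{cs ! csucc n t, cs ! t} \<in> X" using in_X(1) by (simp add: insert_commute)
  then have "cs ! t = cs ! csucc n (csucc n t)"
    using mate_eq[OF X] in_X(2) by metis
  then show False using cs_eq_iff[OF t t1(2)] csucc_csucc_neq[of n t] n_ge_4 t by simp
qed

lemma cyclic_pair_M_alternates:
  assumes t: "t < n"
  shows "cyclic_pair cs (csucc n t) \<in> M \<longleftrightarrow> cyclic_pair cs t \<notin> M"
proof -
  have "csucc n t < n" using csucc_less n_ge_4 by simp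
  then show ?thesis
    using cyclic_pairs_not_both[OF matching t] cyclic_pairs_not_both[OF matching' t]
      cyclic_pair_in_M_or_M'[OF t] cyclic_pair_in_M_or_M'[OF \<open>csucc n t < n\<close>] by blast
qed

definition start :: nat where
  "start = (if cyclic_pair cs 0 \<in> M then 0 else 1)"

lemma cyclic_pair_in_M_iff: "t < n \<Longrightarrow> cyclic_pair cs t \<in> M \<longleftrightarrow> even (t + start)"
proof (induction t)
  case (Suc t)
  then have t: "t < n" by simp
  have "csucc n t = Suc t" using Suc.prems by (rule csucc_of_less)
  then have "cyclic_pair cs (Suc t) \<in> M \<longleftrightarrow> cyclic_pair cs t \<notin> M"
    using cyclic_pair_M_alternates[OF t] by simp
  then show ?case using Suc.IH[OF t] by simp
qed (simp add: start_def)

lemma pairs_MC: "pairs MC start 0 = (\<lambda>i. cyclic_pair cs (2*i + start)) ` {..<card MC}"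
proof -
  have start: "start \<le> 1" unfolding start_def by simp
  have idx: "(2*i + start) mod card Ca = 2*i + start" if "i < card MC" for i
  proof -
    have "2*i + start < card Ca" using that start n_eq by simp
    then show ?thesis by simp
  qed
  have "pairs MC start 0 = (\<lambda>i. cyclic_pair cs ((2*i + 0 + start) mod n)) ` {..<card MC}"
    using pairs_eq[of MC start 0] unfolding Union_MC .
  also have "\<dots> = (\<lambda>i. cyclic_pair cs (2*i + start)) ` {..<card MC}"
    by (rule image_cong) (simp_all add: idx)
  finally show ?thesis .
qed

lemma MC_eq_pairs: "MC = pairs MC start 0"
proof
  have start: "start \<le> 1" unfolding start_def by simp
  show "pairs MC start 0 \<subseteq> MC"
  proof
    fix e assume "e \<in> pairs MC start 0"
    then obtain i where i: "i < card MC" and e: "e = cyclic_pair cs (2*i + start)"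
      unfolding pairs_MC by blast
    have t: "2*i + start < n" using i start n_eq by simp
    have "even (2*i + start + start)" by simp
    then have "cyclic_pair cs (2*i + start) \<in> M" using cyclic_pair_in_M_iff[OF t] by blast
    then show "e \<in> MC" using cyclic_pair_subset[OF t] e by blast
  qed
  show "MC \<subseteq> pairs MC start 0"
  proof
    fix e assume e: "e \<in> MC"
    then obtain s where s: "s < n" "e = cyclic_pair cs s"
      using edge_within_is_cyclic_pair[of e] by blast
    have "cyclic_pair cs s \<in> M" using e s(2) by blast
    then have "even (s + start)" using cyclic_pair_in_M_iff[OF s(1)] by blast
    then have s_eq: "2 * (s div 2) + start = s" using start by presburger
    have "s < card MC * 2" using s(1) n_eq by simp
    then have "s div 2 \<in> {..<card MC}" by (simp add: less_mult_imp_div_less)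
    moreover have "e = cyclic_pair cs (2 * (s div 2) + start)" using s(2) s_eq by simp
    ultimately show "e \<in> pairs MC start 0"
      unfolding pairs_MC by (intro image_eqI)
  qed
qed

lemma hull_disjoint_other_edge:
  assumes e: "e \<in> M" "\<not> e \<subseteq> Ca"
  shows "convex hull (P ` Ca) \<inter> seg P e = {}"
proof -
  obtain c d where cd: "c < d" "d < 2*k" "e = {c, d}"
    using matching_edge_obtain[OF matching e(1)] by blast
  have "Ca \<inter> {c, d} = {}"
  proof (rule ccontr)
    assume "Ca \<inter> {c, d} \<noteq> {}"
    then obtain v where v: "v \<in> Ca" "v \<in> e" using cd by blast
    then have "e \<subseteq> Ca"
      using matching_edge_eq_mate[OF matching e(1) v(2)] mate_in_component(1)[OF v(1) Ca_bound[OF v(1)]]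
      by simp
    then show False using e by simp
  qed
  moreover have "{c, d} \<in> M \<union> M'" using e cd by simp
  ultimately have side: "Ca \<subseteq> {c<..<d} \<or> Ca \<inter> {c<..<d} = {}"
    using component_one_side[OF _ cd(1) a_bound] by blast
  have seg: "seg P e = convex hull (P ` {c, d})" unfolding seg_def cd ..
  have ends: "{c, d} \<subseteq> {..<2*k}" "{c, d} \<inter> {c<..<d} = {}" "{c, d} \<subseteq> {c..d}"
    using cd by auto
  from side show ?thesis
  proof
    assume "Ca \<subseteq> {c<..<d}"
    then show ?thesis unfolding seg by (rule hulls_disjoint_chord_inside[OF cc cd(1,2) _ ends(1,2)])
  next
    assume "Ca \<inter> {c<..<d} = {}"
    moreover have "x \<notin> {c, d}" if "x \<in> Ca" for x using that \<open>Ca \<inter> {c, d} = {}\<close> by blast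
    ultimately have "Ca \<inter> {c..d} = {}" by fastforce
    with hulls_disjoint_chord_outside[OF cc cd(1,2) component_bound[OF a_bound] _ ends(3)]
    show ?thesis unfolding seg by blast
  qed
qed

lemma flippable_MC: "flippable P M MC"
  unfolding flippable_def
proof (intro conjI)
  show "2 \<le> card MC" using n_eq n_ge_4 by simp
  show "\<exists>r. MC = pairs MC r 0" using MC_eq_pairs by blast
  show "\<forall>e\<in>M - MC. convex hull (P ` \<Union>MC) \<inter> seg P e = {}"
    using hull_disjoint_other_edge Union_MC by simp
qed blast

lemma flip_MC: "flip MC = MC'"
proof -
  interpret F: flippable_set P k M MC
    using matching flippable_MC by (simp add: flippable_set_def)
  obtain r where r: "pairs MC r 0 = MC" "pairs MC r 1 = flip MC" by (rule F.flip_offset)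
  have "flip MC \<subseteq> MC'"
  proof
    fix f assume "f \<in> flip MC"
    then have "f \<in> pairs MC r 1" unfolding r(2) .
    then obtain i where i: "i < card MC" and f: "f = cyclic_pair cs ((2*i + 1 + r) mod n)"
      unfolding pairs_eq Union_MC by auto
    define t where "t = (2*i + r) mod n"
    have t: "t < n" unfolding t_def using n_ge_4 by simp
    have "cyclic_pair cs ((2*i + 0 + r) mod n) \<in> pairs MC r 0"
      unfolding pairs_eq Union_MC using i by auto
    then have "cyclic_pair cs t \<in> MC" unfolding r(1) t_def by simp
    then have "cyclic_pair cs (csucc n t) \<notin> M"
      using cyclic_pair_M_alternates[OF t] by simp
    then have "cyclic_pair cs (csucc n t) \<in> M'"
      using cyclic_pair_in_M_or_M'[OF csucc_less[of n t]] n_ge_4 by auto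
    moreover have "csucc n t = (2*i + 1 + r) mod n"
      unfolding t_def csucc_mod by simp
    ultimately show "f \<in> MC'"
      using f cyclic_pair_subset csucc_less[of n] n_ge_4 by auto
  qed
  moreover have "MC' \<subseteq> flip MC"
  proof
    fix f assume f: "f \<in> MC'"
    then obtain s where "s < n" "f = cyclic_pair cs s"
      using edge_within_is_cyclic_pair by blast
    then have "f \<in> MC \<union> flip MC" using F.cyclic_pair_in_N_or_flip Union_MC by simp
    moreover have "f \<notin> MC" using f disjoint by auto
    ultimately show "f \<in> flip MC" by blast
  qed
  ultimately show ?thesis by blast
qed

lemma hulls_disjoint_component_outside_span:
  assumes b: "b < 2*k" and dis: "C b \<inter> Ca = {}" and out: "\<not> (cs ! 0 < b \<and> b < cs ! (n - 1))"
  shows "convex hull (P ` Ca) \<inter> convex hull (P ` C b) = {}"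
proof -
  define y0 yL where "y0 = cs ! 0" and "yL = cs ! (n - 1)"
  have y: "y0 \<in> Ca" "yL \<in> Ca" "y0 < yL" "yL < 2*k"
    unfolding y0_def yL_def using cs_in n_ge_4 sorted_wrt_nth_less[OF sorted_cs, of 0 "n - 1"] Ca_bound
    by auto
  have "csucc n (n - 1) = 0" using csucc_last n_ge_4 by simp
  then have "{y0, yL} \<in> M \<union> M'"
    using cyclic_pair_in_M_or_M'[of "n - 1"] n_ge_4 unfolding y0_def yL_def by (auto simp: insert_commute)
  moreover have "C b \<inter> {y0, yL} = {}" using dis y(1,2) by blast
  ultimately have "C b \<subseteq> {y0<..<yL} \<or> C b \<inter> {y0<..<yL} = {}"
    by (rule component_one_side[OF _ y(3) b])
  then have "C b \<inter> {y0<..<yL} = {}"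
    using component_self[of b] out unfolding y0_def yL_def by auto
  moreover have "x \<notin> {y0, yL}" if "x \<in> C b" for x using that dis y(1,2) by blast
  ultimately have "C b \<inter> {y0..yL} = {}" by fastforce
  moreover have "Ca \<subseteq> {y0..yL}"
    using strict_sorted_first_last[OF sorted_cs] set_cs unfolding y0_def yL_def by auto
  ultimately show ?thesis
    using hulls_disjoint_chord_outside[OF cc y(3,4) component_bound[OF b]] by (simp add: Int_commute)
qed

lemma hulls_disjoint_component_in_gap:
  assumes b: "b < 2*k" and dis: "C b \<inter> Ca = {}" and inside: "cs ! 0 < b" "b < cs ! (n - 1)"
  shows "convex hull (P ` Ca) \<inter> convex hull (P ` C b) = {}"
proof -
  have b_in: "b \<in> C b" "b \<notin> Ca" using component_self dis by auto
  then obtain t where t: "Suc t < n" "cs ! t < b" "b < cs ! Suc t"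
    using strict_sorted_between_consecutive[OF sorted_cs inside] set_cs by auto
  define c d where "c = cs ! t" and "d = cs ! Suc t"
  have cd: "c \<in> Ca" "d \<in> Ca" "c < d" "d < 2*k"
    unfolding c_def d_def using cs_in t Ca_bound by auto
  have "{c, d} \<in> M \<union> M'"
    using cyclic_pair_in_M_or_M'[of t] csucc_of_less[OF t(1)] t(1) unfolding c_def d_def by auto
  moreover have "C b \<inter> {c, d} = {}" using dis cd(1,2) by blast
  ultimately have "C b \<subseteq> {c<..<d} \<or> C b \<inter> {c<..<d} = {}"
    by (rule component_one_side[OF _ cd(3) b])
  then have Cb: "C b \<subseteq> {c<..<d}"
    using b_in t unfolding c_def d_def by auto
  have Ca: "Ca \<inter> {c<..<d} = {}"
    using strict_sorted_outside_consecutive[OF sorted_cs _ t(1)] set_cs unfolding c_def d_def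
    by fastforce
  have "convex hull (P ` C b) \<inter> convex hull (P ` Ca) = {}"
    by (rule hulls_disjoint_chord_inside[OF cc cd(3,4) Cb component_bound[OF a_bound] Ca])
  then show ?thesis by blast
qed

text \<open>Another cycle is either separated from this one by the chord joining its first and last
  vertex, or lies between two consecutive vertices of this one.\<close>
lemma hulls_disjoint_other_component:
  assumes "b < 2*k" "C b \<inter> Ca = {}"
  shows "convex hull (P ` Ca) \<inter> convex hull (P ` C b) = {}"
  using hulls_disjoint_component_outside_span[OF assms] hulls_disjoint_component_in_gap[OF assms]
  by blast

end

context compatible_pair
begin

lemma compatible_component: "a < 2*k \<Longrightarrow> compatible_component P k M M' a"
  by (simp add: compatible_component_def compatible_component_axioms_def compatible_pair_axioms)

lemma part_in_component_partition:
  "a < 2*k \<Longrightarrow> {e \<in> M. e \<subseteq> C a} \<in> component_partition k M M'"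
  unfolding component_partition_def by (intro image_eqI[of _ _ a]) auto

lemma Union_component_partition: "\<Union>(component_partition k M M') = M"
proof
  show "\<Union>(component_partition k M M') \<subseteq> M"
    unfolding component_partition_def by blast
  show "M \<subseteq> \<Union>(component_partition k M M')"
  proof
    fix e assume e: "e \<in> M"
    obtain x y where xy: "x < y" "y < 2*k" "e = {x, y}"
      by (rule matching_edge_obtain[OF matching e])
    then have "e \<in> {f \<in> M. f \<subseteq> C x}"
      using edge_within_own_component[of x y] e by auto
    moreover have "{f \<in> M. f \<subseteq> C x} \<in> component_partition k M M'"
      using part_in_component_partition xy by simp
    ultimately show "e \<in> \<Union>(component_partition k M M')" by blast
  qed
qed

lemma flip_component_partition: "\<Union>(flip ` component_partition k M M') = M'"
proof
  have flip_part: "flip {e \<in> M. e \<subseteq> C a} = {e \<in> M'. e \<subseteq> C a}" if "a < 2*k" for a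
    using compatible_component.flip_MC[OF compatible_component[OF that]] .
  show "\<Union>(flip ` component_partition k M M') \<subseteq> M'"
  proof
    fix f assume "f \<in> \<Union>(flip ` component_partition k M M')"
    then obtain a where "a < 2*k" "f \<in> flip {e \<in> M. e \<subseteq> C a}"
      unfolding component_partition_def by auto
    then show "f \<in> M'" using flip_part by auto
  qed
  show "M' \<subseteq> \<Union>(flip ` component_partition k M M')"
  proof
    fix f assume f: "f \<in> M'"
    obtain x y where xy: "x < y" "y < 2*k" "f = {x, y}"
      by (rule matching_edge_obtain[OF matching' f])
    then have "f \<in> flip {e \<in> M. e \<subseteq> C x}"
      using flip_part edge_within_own_component[of x y] f by auto
    moreover have "{e \<in> M. e \<subseteq> C x} \<in> component_partition k M M'"
      using part_in_component_partition xy by simp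
    ultimately show "f \<in> \<Union>(flip ` component_partition k M M')" by blast
  qed
qed

lemma component_partition_memberD:
  "N \<in> component_partition k M M' \<Longrightarrow> \<exists>a<2*k. N = {e \<in> M. e \<subseteq> C a}"
  unfolding component_partition_def by blast

lemma components_disjoint_if_parts_differ:
  assumes "{e \<in> M. e \<subseteq> C a} \<noteq> {e \<in> M. e \<subseteq> C b}"
  shows "C a \<inter> C b = {}"
proof (rule ccontr)
  assume "C a \<inter> C b \<noteq> {}"
  then obtain v where "v \<in> C a" "v \<in> C b" by blast
  then have "C a = C b" using component_eq by metis
  then show False using assms by simp
qed

lemma component_partition_nonempty: "{} \<notin> component_partition k M M'"
proof
  assume "{} \<in> component_partition k M M'"
  then obtain a where a: "a < 2*k" "{e \<in> M. e \<subseteq> C a} = {}"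
    using component_partition_memberD by metis
  have "{a, mate M a} \<in> {e \<in> M. e \<subseteq> C a}"
    using mate_edge[OF matching a(1)] edge_within_own_component[of a "mate M a"] by simp
  then show False using a(2) by simp
qed

lemma component_partition_disjoint:
  assumes N: "N1 \<in> component_partition k M M'" "N2 \<in> component_partition k M M'" "N1 \<noteq> N2"
  shows "N1 \<inter> N2 = {}"
proof -
  obtain a b where ab: "N1 = {e \<in> M. e \<subseteq> C a}" "N2 = {e \<in> M. e \<subseteq> C b}"
    using component_partition_memberD N(1,2) by metis
  then have disj: "C a \<inter> C b = {}" using components_disjoint_if_parts_differ N(3) by simp
  have "{} \<notin> M" using matching_edge[OF matching, of "{}"] by auto
  moreover have "e = {}" if "e \<in> N1" "e \<in> N2" for e using that ab disj by blast
  ultimately show ?thesis using ab by blast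
qed

lemma component_partition_flippable: "N \<in> component_partition k M M' \<Longrightarrow> flippable P M N"
  using component_partition_memberD compatible_component.flippable_MC[OF compatible_component] by blast

lemma component_partition_hulls_disjoint:
  assumes N: "N1 \<in> component_partition k M M'" "N2 \<in> component_partition k M M'" "N1 \<noteq> N2"
  shows "convex hull (P ` \<Union>N1) \<inter> convex hull (P ` \<Union>N2) = {}"
proof -
  obtain a b where ab: "a < 2*k" "b < 2*k" "N1 = {e \<in> M. e \<subseteq> C a}" "N2 = {e \<in> M. e \<subseteq> C b}"
    using component_partition_memberD N(1,2) by metis
  have "\<Union>N1 = C a" "\<Union>N2 = C b"
    using compatible_component.Union_MC[OF compatible_component[OF ab(1)]]
      compatible_component.Union_MC[OF compatible_component[OF ab(2)]] ab(3,4) by simp_all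
  moreover have "C b \<inter> C a = {}"
    using components_disjoint_if_parts_differ[of a b] N(3) ab(3,4) by (simp add: Int_commute)
  ultimately show ?thesis
    using compatible_component.hulls_disjoint_other_component[OF compatible_component[OF ab(1)] ab(2)]
    by simp
qed

lemma good_partition_components: "good_partition P M M' (component_partition k M M')"
  by (simp add: good_partition_def Union_component_partition flip_component_partition
      component_partition_nonempty component_partition_disjoint component_partition_flippable
      component_partition_hulls_disjoint)

end

theorem mainTheorem5:
  fixes P :: "nat \<Rightarrow> real^2" and k :: nat and M M' :: "nat set set"
  assumes "k \<ge> 1"
    and "convex_clockwise P k"
    and "is_matching P k M"
    and "is_matching P k M'"
  shows "(disjoint_compatible P M M' \<longleftrightarrow> (\<exists>Pt. good_partition P M M' Pt)) \<and>
         (\<forall>Pt1 Pt2. good_partition P M M' Pt1 \<and> good_partition P M M' Pt2 \<longrightarrow> Pt1 = Pt2)"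
proof (intro conjI allI impI iffI)
  assume "disjoint_compatible P M M'"
  then interpret compatible_pair P k M M'
    using assms(2-4) by (simp add: compatible_pair_def disjoint_compatible_def)
  show "\<exists>Pt. good_partition P M M' Pt"
    using good_partition_components by blast
next
  assume "\<exists>Pt. good_partition P M M' Pt"
  then show "disjoint_compatible P M M'"
    using good_partition_disjoint_compatible assms(2-4) by blast
next
  fix Pt1 Pt2
  assume "good_partition P M M' Pt1 \<and> good_partition P M M' Pt2"
  then show "Pt1 = Pt2"
    using good_partition_subset[OF assms(3,4)] by blast
qed

end
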